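(* Let $0\le k\le l$ be integers. For every $m\ge 1$, $$d_m(g_{l,k})=\begin{cases}\lfloor\tfrac{l+1}{m}\rfloor-1-\lfloor\tfrac{l-k}{m}\rfloor & \text{for } 1\le m\le k,\\ 0 & \text{for } m>k,\end{cases}$$ and, up to a unit, $g_{l,k}=\prod_{m\ge1}\Phi_m^{d_m(g_{l,k})}$.
   Context: In $\mathbb{Z}[q,q^{-1}]$ set $\{i\}_q=q^i-1$, $\{i\}_{q,n}=\{i\}_q\{i-1\}_q\cdots\{i-n+1\}_q$ (equal to $1$ for $n=0$), $\{n\}_q!=\{n\}_{q,n}$. For $0\le i\le k\le l$ set $h_{l,k,i}=\{l-i\}_{q,k-i}\,\{i\}_q!$, and let $g_{l,k}=\mathrm{GCD}(h_{l,k,0},\dots,h_{l,k,k})$, a greatest common divisor in the UFD $\mathbb{Z}[q,q^{-1}]$ (defined up to units $\pm q^j$). For nonzero $a\in\mathbb{Z}[q,q^{-1}]$ and $m\ge1$, $d_m(a)$ is the largest integer $i$ with $a\in\Phi_m^i\mathbb{Z}[q,q^{-1}]$, where $\Phi_m$ is the $m$th cyclotomic polynomial. $\lfloor r\rfloor$ is the floor of $r$. *)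

theory Defs
  imports Complex_Main "HOL-Computational_Algebra.Computational_Algebra"
begin

text \<open>Elements of Z[q,q^-1] are represented by integer polynomials in q; every Laurent
  polynomial is a unit q^(-j) times such a polynomial, and all objects here are
  polynomials anyway.\<close>

definition qb :: "nat \<Rightarrow> int poly" where
  "qb i = monom 1 i - 1"

definition qfall :: "nat \<Rightarrow> nat \<Rightarrow> int poly" where
  "qfall i n = (\<Prod>j<n. qb (i - j))"

definition qfact :: "nat \<Rightarrow> int poly" where
  "qfact n = qfall n n"

definition hlki :: "nat \<Rightarrow> nat \<Rightarrow> nat \<Rightarrow> int poly" where
  "hlki l k i = qfall (l - i) (k - i) * qfact i"

text \<open>Divisibility in Z[q,q^-1], expressed on polynomial representatives.\<close>
definition ldvd :: "int poly \<Rightarrow> int poly \<Rightarrow> bool" where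
  "ldvd a b \<longleftrightarrow> (\<exists>j::nat. a dvd monom 1 j * b)"

definition is_lgcd :: "int poly \<Rightarrow> int poly set \<Rightarrow> bool" where
  "is_lgcd g H \<longleftrightarrow> (\<forall>h\<in>H. ldvd g h) \<and> (\<forall>d. (\<forall>h\<in>H. ldvd d h) \<longrightarrow> ldvd d g)"

definition cyclo :: "nat \<Rightarrow> int poly" where
  "cyclo m = (THE p. map_poly of_int p =
      (\<Prod>j\<in>{j. j < m \<and> coprime j m}. [:- cis (2 * pi * real j / real m), 1:]))"

definition dm :: "nat \<Rightarrow> int poly \<Rightarrow> nat" where
  "dm m a = (GREATEST i. ldvd (cyclo m ^ i) a)"

end

theory Submission
  imports Defs
begin

(*
  The gcd g of the polynomials h_{l,k,i} = {l-i}_{q,k-i} {i}_q! (0 <= i <= k) is computed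
  root by root over the complex numbers.  Each factor q^t - 1 is the product of the linear
  factors q - z over the t-th roots of unity, so at a primitive m-th root of unity z the
  order of vanishing of h_{l,k,i} is the number of multiples of m among l-k+1, ..., l-i and
  among 1, ..., i, namely  c_m(i) = (l-i) div m - (l-k) div m + i div m,  and h_{l,k,i} has
  no other roots.  An elementary estimate on integer division shows that
  e_m = min_i c_m(i) equals (l+1) div m - 1 - (l-k) div m for m <= k (attained at i = m-1)
  and 0 for m > k (attained at i = k).  The monic integer polynomial P = prod_m Phi_m^{e_m}
  therefore divides every h_{l,k,i} and has, at every nonzero complex point, the least order
  among them.  As h_{l,k,0} has constant term +-1, every gcd in Z[q,q^-1] is +-q^j P, which
  yields d_m(g) = e_m and the product formula.
*)

section \<open>The embedding of integer polynomials into complex polynomials\<close>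

abbreviation phi :: "int poly \<Rightarrow> complex poly" where
  "phi \<equiv> map_poly of_int"

lemma phi_add: "phi (p + q) = phi p + phi q"
  by (intro poly_eqI) (simp add: coeff_map_poly)

lemma phi_diff: "phi (p - q) = phi p - phi q"
  by (intro poly_eqI) (simp add: coeff_map_poly)

lemma phi_mult: "phi (p * q) = phi p * phi q"
  by (induct p) (simp_all add: map_poly_pCons phi_add map_poly_smult)

lemma phi_prod: "phi (\<Prod>i\<in>A. f i) = (\<Prod>i\<in>A. phi (f i))"
  by (induct A rule: infinite_finite_induct) (simp_all add: phi_mult)

lemma phi_power: "phi (p ^ n) = phi p ^ n"
  by (induct n) (simp_all add: phi_mult)

lemma phi_monom: "phi (monom c n) = monom (of_int c) n"
  by (simp add: map_poly_monom)

lemma phi_inj: "phi p = phi q \<Longrightarrow> p = q"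
  by (metis (no_types, lifting) coeff_map_poly of_int_0 of_int_eq_iff poly_eqI)

lemma phi_eq_0_iff [simp]: "phi p = 0 \<longleftrightarrow> p = 0"
  using phi_inj by fastforce

lemma lead_coeff_phi: "lead_coeff (phi p) = of_int (lead_coeff p)"
  by (simp add: coeff_map_poly degree_map_poly)

section \<open>Primitive roots of unity\<close>

definition prim :: "nat \<Rightarrow> complex set" where
  "prim m = {z. 0 < m \<and> z ^ m = 1 \<and> (\<forall>d. 0 < d \<longrightarrow> d < m \<longrightarrow> z ^ d \<noteq> 1)}"

lemma prim_pos: "z \<in> prim m \<Longrightarrow> 0 < m"
  by (simp add: prim_def)

lemma prim_one: "z \<in> prim m \<Longrightarrow> z ^ m = 1"
  by (simp add: prim_def)

lemma prim_dvd_iff: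
  assumes "z \<in> prim m"
  shows "z ^ t = 1 \<longleftrightarrow> m dvd t"
proof
  assume zt: "z ^ t = 1"
  have m: "0 < m" "z ^ m = 1" "\<And>d. 0 < d \<Longrightarrow> d < m \<Longrightarrow> z ^ d \<noteq> 1"
    using assms by (auto simp: prim_def)
  have "z ^ t = (z ^ m) ^ (t div m) * z ^ (t mod m)"
    by (metis div_mult_mod_eq mult.commute power_add power_mult)
  then have "z ^ (t mod m) = 1" using zt m by simp
  then have "t mod m = 0" using m(1,3) by (metis neq0_conv mod_less_divisor)
  then show "m dvd t" by auto
next
  assume "m dvd t"
  then show "z ^ t = 1" using assms by (auto simp: prim_def power_mult)
qed

lemma prim_unique: "z \<in> prim m \<Longrightarrow> z \<in> prim d \<Longrightarrow> m = d"
  by (metis dvd_antisym prim_dvd_iff prim_one)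

lemma prim_ne0: "z \<in> prim m \<Longrightarrow> z \<noteq> 0"
  by (metis power_0_left prim_one prim_pos neq0_conv zero_neq_one)

lemma prim_exists:
  assumes "0 < t" "z ^ t = (1::complex)"
  shows "\<exists>m. z \<in> prim m \<and> m dvd t"
proof -
  define m where "m = (LEAST d. 0 < d \<and> z ^ d = 1)"
  have "0 < m \<and> z ^ m = 1"
    unfolding m_def by (rule LeastI[of _ t]) (use assms in auto)
  moreover have "\<And>d. 0 < d \<Longrightarrow> d < m \<Longrightarrow> z ^ d \<noteq> 1"
    unfolding m_def using not_less_Least by blast
  ultimately have "z \<in> prim m" by (simp add: prim_def)
  then show ?thesis using prim_dvd_iff assms by blast
qed

lemma prim_or_not_root_of_unity: "(\<exists>m. z \<in> prim m) \<or> (\<forall>t. 0 < t \<longrightarrow> z ^ t \<noteq> 1)"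
  using prim_exists by blast

lemma finite_prim: "finite (prim m)"
proof (cases "m = 0")
  case False
  then have "prim m \<subseteq> {z. z ^ m = 1}" by (auto simp: prim_def)
  moreover have "finite {z::complex. z ^ m = 1}" using False by (intro finite_roots_unity) auto
  ultimately show ?thesis by (rule finite_subset)
qed (simp add: prim_def)

lemma roots_unity_Union:
  assumes "0 < t"
  shows "{z::complex. z ^ t = 1} = (\<Union>d\<in>{d. d dvd t}. prim d)"
  using prim_exists[OF assms] prim_dvd_iff by blast

lemma omega_prim:
  assumes "0 < m"
  shows "cis (2 * pi / real m) \<in> prim m"
proof -
  let ?f = "\<lambda>k. cis (2 * pi * real k / real m)"
  have inj: "inj_on ?f {..<m}"
    using bij_betw_roots_unity[OF assms] by (simp add: bij_betw_def)
  have pow: "cis (2 * pi / real m) ^ d = ?f (d mod m)" for d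
  proof -
    have "cis (2 * pi / real m) ^ d = cis (2 * pi * real d / real m)"
      by (simp add: DeMoivre mult.commute)
    also have "real d = real m * real (d div m) + real (d mod m)"
      by (metis mult_div_mod_eq of_nat_add of_nat_mult)
    also have "2 * pi * (real m * real (d div m) + real (d mod m)) / real m
        = 2 * pi * real (d div m) + 2 * pi * real (d mod m) / real m"
      using assms by (simp add: field_simps)
    also have "cis \<dots> = ?f (d mod m)"
      by (simp add: cis_mult[symmetric] DeMoivre[symmetric] cis_2pi)
    finally show ?thesis .
  qed
  have "cis (2 * pi / real m) ^ d = 1 \<longleftrightarrow> d mod m = 0" for d
  proof -
    have "?f (d mod m) = ?f 0 \<longleftrightarrow> d mod m = 0"
      using inj assms by (metis inj_onD lessThan_iff mod_less_divisor)
    then show ?thesis using pow by simp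
  qed
  then show ?thesis using assms by (auto simp: prim_def)
qed

lemma coprime_iff_no_small_multiple:
  fixes j m :: nat
  assumes "0 < m"
  shows "(\<forall>d. 0 < d \<longrightarrow> d < m \<longrightarrow> \<not> m dvd j * d) \<longleftrightarrow> coprime j m"
proof
  assume small: "\<forall>d. 0 < d \<longrightarrow> d < m \<longrightarrow> \<not> m dvd j * d"
  show "coprime j m"
  proof (rule ccontr)
    assume "\<not> coprime j m"
    define g where "g = gcd j m"
    have "g \<noteq> 1" "0 < g" "g dvd m" "g dvd j"
      using \<open>\<not> coprime j m\<close> assms by (simp_all add: g_def coprime_iff_gcd_eq_1)
    define d where "d = m div g"
    have "0 < d" "d < m"
      using \<open>g \<noteq> 1\<close> \<open>0 < g\<close> \<open>g dvd m\<close> assms by (auto simp: d_def dvd_div_eq_0_iff)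
    moreover have "j * d = (j div g) * m"
      using \<open>g dvd m\<close> \<open>g dvd j\<close> by (simp add: d_def) (metis div_mult_swap dvd_div_mult mult.commute)
    then have "m dvd j * d" by simp
    ultimately show False using small by auto
  qed
next
  assume "coprime j m"
  then show "\<forall>d. 0 < d \<longrightarrow> d < m \<longrightarrow> \<not> m dvd j * d"
    by (metis coprime_commute coprime_dvd_mult_right_iff nat_dvd_not_less)
qed

lemma cis_prim_iff:
  assumes "0 < m"
  shows "cis (2 * pi * real j / real m) \<in> prim m \<longleftrightarrow> coprime j m"
proof -
  let ?w = "cis (2 * pi / real m)"
  have w: "?w \<in> prim m" by (rule omega_prim[OF assms])
  have "cis (2 * pi * real j / real m) = ?w ^ j" by (simp add: DeMoivre mult.commute)
  moreover have "(?w ^ j) ^ d = 1 \<longleftrightarrow> m dvd j * d" for d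
    by (simp add: power_mult[symmetric] prim_dvd_iff[OF w])
  ultimately show ?thesis
    using assms coprime_iff_no_small_multiple[OF assms] by (simp add: prim_def)
qed

lemma bij_cis_prim:
  assumes "0 < m"
  shows "bij_betw (\<lambda>j. cis (2 * pi * real j / real m)) {j. j < m \<and> coprime j m} (prim m)"
proof -
  let ?f = "\<lambda>j. cis (2 * pi * real j / real m)"
  have roots: "bij_betw ?f {..<m} {z. z ^ m = 1}" by (rule bij_betw_roots_unity[OF assms])
  have "inj_on ?f {j. j < m \<and> coprime j m}"
    using roots by (auto simp: bij_betw_def intro: inj_on_subset)
  moreover have "?f ` {j. j < m \<and> coprime j m} = prim m"
  proof safe
    fix j assume "j < m" "coprime j m"
    then show "?f j \<in> prim m" using cis_prim_iff[OF assms] by blast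
  next
    fix z assume z: "z \<in> prim m"
    then obtain j where j: "j < m" "z = ?f j"
      using roots prim_one by (force simp: bij_betw_def)
    then show "z \<in> ?f ` {j. j < m \<and> coprime j m}" using z cis_prim_iff[OF assms] by blast
  qed
  ultimately show ?thesis by (simp add: bij_betw_def)
qed

section \<open>Complex polynomials are determined by their root orders\<close>

lemma order_linear: "order z [:-w, 1:] = (if z = w then 1 else (0::nat))"
  using order_power_n_n[of w 1] by (auto intro: order_0I)

lemma order_prod:
  fixes f :: "'b \<Rightarrow> 'a::idom poly"
  assumes "finite A" "\<And>a. a \<in> A \<Longrightarrow> f a \<noteq> 0"
  shows "order z (\<Prod>a\<in>A. f a) = (\<Sum>a\<in>A. order z (f a))"
  using assms
proof (induct A rule: finite_induct)
  case (insert x A)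
  then have "(\<Prod>a\<in>A. f a) \<noteq> 0" "f x \<noteq> 0" by (simp_all add: prod_zero_iff)
  then show ?case using insert by (simp add: order_mult)
qed simp

lemma order_power:
  fixes p :: "'a::idom poly"
  assumes "p \<noteq> 0"
  shows "order z (p ^ n) = n * order z p"
  using assms by (induct n) (simp_all add: order_mult)

lemma order_prod_linear:
  fixes z :: "'a::idom"
  assumes "finite S"
  shows "order z (\<Prod>w\<in>S. [:-w, 1:]) = (if z \<in> S then 1 else 0)"
  using assms by (simp add: order_prod order_linear)

lemma prod_linear_powers_dvd:
  fixes q :: "'a::idom poly"
  assumes "finite S" "q \<noteq> 0" "\<And>z. z \<in> S \<Longrightarrow> e z \<le> order z q"
  shows "(\<Prod>z\<in>S. [:-z, 1:] ^ e z) dvd q"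
  using assms
proof (induct S rule: finite_induct)
  case (insert a S)
  let ?Q = "\<Prod>z\<in>S. [:-z, 1:] ^ e z"
  obtain r where r: "q = ?Q * r" using insert by auto
  have Q_ne: "?Q \<noteq> 0" using insert(1) by (simp add: prod_zero_iff)
  have "order a ?Q = 0"
    using insert by (intro order_0I) (simp add: poly_prod prod_zero_iff)
  then have "order a q = order a r" using r Q_ne insert(4) by (simp add: order_mult)
  then have "e a \<le> order a r" using insert(5)[of a] by simp
  then have "[:-a, 1:] ^ e a dvd r" by (simp add: order_divides)
  then have "[:-a, 1:] ^ e a * ?Q dvd r * ?Q" by (rule mult_dvd_mono) simp
  then show ?case using insert(1,2) r by (simp add: mult.commute)
qed simp

lemma order_le_imp_dvd:
  fixes p q :: "complex poly"
  assumes "p \<noteq> 0" "q \<noteq> 0" "\<And>z. order z p \<le> order z q"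
  shows "p dvd q"
proof -
  have "(\<Prod>z | poly p z = 0. [:-z, 1:] ^ order z p) dvd q"
    using assms by (intro prod_linear_powers_dvd poly_roots_finite) auto
  then have "smult (lead_coeff p) (\<Prod>z | poly p z = 0. [:-z, 1:] ^ order z p) dvd q"
    using assms(1) by (simp add: smult_dvd_iff)
  then show ?thesis by (simp add: complex_poly_decompose)
qed

lemma same_orders_imp_proportional:
  fixes p q :: "complex poly"
  assumes "p \<noteq> 0" "q \<noteq> 0" "\<And>z. order z p = order z q"
  shows "smult (lead_coeff q) p = smult (lead_coeff p) q"
proof -
  let ?F = "\<lambda>r. \<Prod>z | poly r z = 0. [:-z, 1:] ^ order z r"
  have "{z. poly p z = 0} = {z. poly q z = 0}" using assms by (auto simp: order_root)
  then have F: "?F p = ?F q" using assms(3) by simp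
  have "smult (lead_coeff q) p = smult (lead_coeff q * lead_coeff p) (?F p)"
    by (subst complex_poly_decompose[symmetric, of p]) simp
  also have "\<dots> = smult (lead_coeff p) (smult (lead_coeff q) (?F q))"
    by (simp add: F mult.commute)
  also have "\<dots> = smult (lead_coeff p) q" by (simp add: complex_poly_decompose)
  finally show ?thesis .
qed

section \<open>Cyclotomic polynomials\<close>

lemma degree_monom_minus_1:
  assumes "0 < t"
  shows "degree (monom 1 t - 1 :: 'a::idom poly) = t"
proof -
  have "degree (monom 1 t + (-1 :: 'a poly)) = degree (monom (1::'a) t)"
    using assms by (intro degree_add_eq_left) (simp add: degree_monom_eq)
  then show ?thesis by (simp add: degree_monom_eq)
qed

lemma lead_coeff_monom_minus_1: "0 < t \<Longrightarrow> lead_coeff (monom 1 t - 1 :: 'a::idom poly) = 1"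
  by (simp add: degree_monom_minus_1)

lemma monom_minus_1_prod_roots:
  assumes "0 < t"
  shows "(monom 1 t - 1 :: complex poly) = (\<Prod>z\<in>{z. z ^ t = 1}. [:-z, 1:])"
proof -
  let ?P = "\<Prod>z\<in>{z::complex. z ^ t = 1}. [:-z, 1:]"
  let ?X = "monom 1 t - 1 :: complex poly"
  have fin: "finite {z::complex. z ^ t = 1}" using assms by (intro finite_roots_unity) auto
  have X_ne: "?X \<noteq> 0" by (metis assms degree_0 degree_monom_minus_1 less_irrefl)
  have "(\<Prod>z\<in>{z. z ^ t = 1}. [:-z, 1:] ^ 1) dvd ?X"
    using X_ne by (intro prod_linear_powers_dvd[OF fin]) (auto simp: order_gt_0_iff poly_monom Suc_le_eq)
  then obtain r where r: "?X = ?P * r" by auto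
  have P_ne: "?P \<noteq> 0" and r_ne: "r \<noteq> 0" using r X_ne by auto
  have "degree ?P = t"
    by (simp add: degree_prod_eq_sum_degree card_roots_unity_eq[OF assms])
  then have "t + degree r = t"
    using degree_mult_eq[OF P_ne r_ne] degree_monom_minus_1[OF assms] r by metis
  then have "degree r = 0" by simp
  then obtain c where c: "r = [:c:]" by (metis degree_eq_zeroE)
  have "lead_coeff ?P = 1" by (simp add: lead_coeff_prod)
  then have "c = 1"
    using lead_coeff_monom_minus_1[OF assms] r c by (metis lead_coeff_mult coeff_pCons_0 degree_pCons_0 mult_1)
  then show ?thesis using r c by simp
qed

lemma order_monom_minus_1:
  "0 < t \<Longrightarrow> order z (monom 1 t - 1 :: complex poly) = (if z ^ t = 1 then 1 else 0)"
  by (simp add: monom_minus_1_prod_roots order_prod_linear finite_roots_unity)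

definition cyclo_C :: "nat \<Rightarrow> complex poly" where
  "cyclo_C m = (\<Prod>z\<in>prim m. [:-z, 1:])"

lemma cyclo_C_cis:
  assumes "0 < m"
  shows "(\<Prod>j\<in>{j. j < m \<and> coprime j m}. [:- cis (2 * pi * real j / real m), 1:]) = cyclo_C m"
  unfolding cyclo_C_def
  using prod.reindex_bij_betw[OF bij_cis_prim[OF assms], of "\<lambda>z. [:-z,1:]"] by simp

lemma lead_coeff_cyclo_C: "lead_coeff (cyclo_C m) = 1"
  by (simp add: cyclo_C_def lead_coeff_prod)

lemma monom_minus_1_prod_cyclo_C:
  assumes "0 < t"
  shows "(monom 1 t - 1 :: complex poly) = (\<Prod>d\<in>{d. d dvd t}. cyclo_C d)"
proof -
  have disj: "\<forall>i\<in>{d. d dvd t}. \<forall>j\<in>{d. d dvd t}. i \<noteq> j \<longrightarrow> prim i \<inter> prim j = {}"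
    using prim_unique by blast
  have "(monom 1 t - 1 :: complex poly) = (\<Prod>z\<in>(\<Union>d\<in>{d. d dvd t}. prim d). [:-z, 1:])"
    using monom_minus_1_prod_roots[OF assms] roots_unity_Union[OF assms] by simp
  also have "\<dots> = (\<Prod>d\<in>{d. d dvd t}. \<Prod>z\<in>prim d. [:-z, 1:])"
    using assms by (intro prod.UNION_disjoint disj) (simp_all add: finite_prim)
  finally show ?thesis by (simp add: cyclo_C_def)
qed

lemma monic_dvd_over_int:
  fixes Q A :: "int poly"
  assumes Q: "lead_coeff Q = 1" and dvd: "phi Q dvd phi A"
  shows "Q dvd A"
proof -
  have Q_ne: "Q \<noteq> 0" using Q by auto
  obtain q r where pd: "pseudo_divmod A Q = (q, r)" by (cases "pseudo_divmod A Q") auto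
  have A: "A = Q * q + r" using pseudo_divmod(1)[OF Q_ne pd] Q by simp
  have r_small: "r = 0 \<or> degree r < degree Q" using pseudo_divmod(2)[OF Q_ne pd] .
  obtain S where "phi A = phi Q * S" using dvd by auto
  then have r: "phi r = phi Q * (S - phi q)"
    using A by (simp add: phi_add phi_mult algebra_simps)
  have "r = 0"
  proof (rule ccontr)
    assume "r \<noteq> 0"
    then have "S - phi q \<noteq> 0" using r by auto
    then have "degree r = degree Q + degree (S - phi q)"
      using r Q_ne by (metis degree_map_poly degree_mult_eq lead_coeff_phi of_int_eq_0_iff phi_eq_0_iff)
    then show False using r_small \<open>r \<noteq> 0\<close> by simp
  qed
  then show ?thesis using A by simp
qed

text \<open>Phi_m has integer coefficients: by induction on m, dividing q^m - 1 by the monic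
  integer polynomial prod of Phi_d over the proper divisors d of m.\<close>
lemma cyclo_C_integral: "0 < m \<Longrightarrow> \<exists>p. phi p = cyclo_C m \<and> lead_coeff p = 1"
proof (induct m rule: less_induct)
  case (less m)
  define D where "D = {d. d dvd m \<and> d \<noteq> m}"
  have D_small: "\<And>d. d \<in> D \<Longrightarrow> 0 < d \<and> d < m"
    using less(2) by (auto simp: D_def dest: dvd_imp_le intro: Nat.gr0I)
  obtain psi where psi: "\<And>d. d \<in> D \<Longrightarrow> phi (psi d) = cyclo_C d \<and> lead_coeff (psi d) = 1"
    using less(1) D_small by metis
  define Q where "Q = (\<Prod>d\<in>D. psi d)"
  have Q: "phi Q = (\<Prod>d\<in>D. cyclo_C d)" "lead_coeff Q = 1"
    using psi by (simp_all add: Q_def phi_prod lead_coeff_prod)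
  have "finite D" "m \<notin> D" "{d. d dvd m} = insert m D" using less(2) by (auto simp: D_def)
  then have X: "(monom 1 m - 1 :: complex poly) = cyclo_C m * phi Q"
    using monom_minus_1_prod_cyclo_C[OF less(2)] Q(1) by simp
  have phi_X: "phi (monom 1 m - 1) = monom 1 m - 1" by (simp add: phi_diff phi_monom)
  then have "phi Q dvd phi (monom 1 m - 1)" using X by simp
  then obtain R where "monom 1 m - 1 = Q * R" using monic_dvd_over_int[OF Q(2)] by blast
  then have "phi Q * phi R = phi Q * cyclo_C m" using X phi_X by (metis phi_mult mult.commute)
  then have "phi R = cyclo_C m" using Q(2) by auto
  moreover have "lead_coeff R = 1"
    using lead_coeff_phi[of R] \<open>phi R = cyclo_C m\<close> lead_coeff_cyclo_C[of m] by simp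
  ultimately show ?case by blast
qed

lemma phi_cyclo:
  assumes "0 < m"
  shows "phi (cyclo m) = cyclo_C m"
proof -
  obtain p where p: "phi p = cyclo_C m" using cyclo_C_integral[OF assms] by blast
  have "phi (cyclo m) = (\<Prod>j\<in>{j. j < m \<and> coprime j m}. [:- cis (2 * pi * real j / real m), 1:])"
    unfolding cyclo_def
    by (rule theI[of _ p]) (use p cyclo_C_cis[OF assms] phi_inj in auto)
  then show ?thesis using cyclo_C_cis[OF assms] by simp
qed

lemma lead_coeff_cyclo:
  assumes "0 < m"
  shows "lead_coeff (cyclo m) = 1"
proof -
  have "of_int (lead_coeff (cyclo m)) = (1::complex)"
    by (metis assms lead_coeff_phi lead_coeff_cyclo_C phi_cyclo)
  then show ?thesis by simp
qed

lemma cyclo_ne_0: "0 < m \<Longrightarrow> cyclo m \<noteq> 0"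
  by (metis lead_coeff_cyclo leading_coeff_0_iff zero_neq_one)

lemma order_cyclo: "0 < m \<Longrightarrow> order z (phi (cyclo m)) = (if z \<in> prim m then 1 else 0)"
  by (simp add: phi_cyclo cyclo_C_def order_prod_linear finite_prim)

section \<open>The root orders of h_{l,k,i}\<close>

lemma qb_ne_0: "0 < t \<Longrightarrow> qb t \<noteq> 0"
  unfolding qb_def by (metis degree_0 degree_monom_minus_1 less_irrefl)

lemma order_qb: "0 < t \<Longrightarrow> order z (phi (qb t)) = (if z ^ t = 1 then 1 else 0)"
  by (simp add: qb_def phi_diff phi_monom order_monom_minus_1)

lemma hlki_prod: "hlki l k i = (\<Prod>j<k-i. qb (l - i - j)) * (\<Prod>j<i. qb (i - j))"
  by (simp add: hlki_def qfall_def qfact_def)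

lemma hlki_ne_0:
  assumes "i \<le> k" "k \<le> l"
  shows "hlki l k i \<noteq> 0"
  unfolding hlki_prod using assms by (auto simp: prod_zero_iff qb_ne_0 dest: qb_ne_0[of 0])

lemma poly_hlki_0_at_0:
  assumes "k \<le> l"
  shows "poly (hlki l k 0) 0 = (-1) ^ k"
proof -
  have "poly (qb (l - j)) 0 = -1" if "j < k" for j
    using assms that by (simp add: qb_def poly_monom power_0_left)
  then show ?thesis by (simp add: hlki_prod poly_prod)
qed

lemma order_hlki:
  assumes "i \<le> k" "k \<le> l"
  shows "order z (phi (hlki l k i)) =
     (\<Sum>j<k-i. if z ^ (l - i - j) = 1 then 1 else 0) + (\<Sum>j<i. if z ^ (i - j) = 1 then 1 else 0)"
proof -
  have ne1: "\<And>j. j \<in> {..<k-i} \<Longrightarrow> phi (qb (l - i - j)) \<noteq> 0"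
    and ne2: "\<And>j. j \<in> {..<i} \<Longrightarrow> phi (qb (i - j)) \<noteq> 0"
    using assms by (auto simp: qb_ne_0)
  have "order z (phi (hlki l k i)) =
      order z (\<Prod>j<k-i. phi (qb (l - i - j))) + order z (\<Prod>j<i. phi (qb (i - j)))"
    using ne1 ne2 by (simp add: hlki_prod phi_mult phi_prod order_mult prod_zero_iff)
  also have "\<dots> = (\<Sum>j<k-i. order z (phi (qb (l - i - j)))) + (\<Sum>j<i. order z (phi (qb (i - j))))"
    using order_prod[of "{..<k-i}" "\<lambda>j. phi (qb (l - i - j))" z, OF finite_lessThan ne1]
      order_prod[of "{..<i}" "\<lambda>j. phi (qb (i - j))" z, OF finite_lessThan ne2]
    by (rule arg_cong2[where f="(+)"])
  also have "\<dots> = (\<Sum>j<k-i. if z ^ (l - i - j) = 1 then 1 else 0)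
                  + (\<Sum>j<i. if z ^ (i - j) = 1 then 1 else 0)"
    using assms by (intro arg_cong2[where f="(+)"] sum.cong refl) (simp_all add: order_qb)
  finally show ?thesis .
qed

lemma count_multiples:
  fixes m :: nat
  assumes "n \<le> a"
  shows "(\<Sum>j<n. if m dvd (a - j) then 1 else 0) = a div m - (a - n) div m"
  using assms
proof (induct n)
  case (Suc n)
  obtain y where y: "a - n = Suc y" "a - Suc n = y" using Suc(2) by (cases "a - n") auto
  have "(a - n) div m = (a - Suc n) div m + (if m dvd (a - n) then 1 else 0)"
    unfolding y by (simp add: div_Suc dvd_eq_mod_eq_0 mod_Suc)
  moreover have "(a - n) div m \<le> a div m" by (simp add: div_le_mono)
  ultimately show ?case using Suc by simp
qed simp

definition mult_h :: "nat \<Rightarrow> nat \<Rightarrow> nat \<Rightarrow> nat \<Rightarrow> nat" where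
  "mult_h l k m i = ((l - i) div m - (l - k) div m) + i div m"

lemma order_hlki_prim:
  assumes z: "z \<in> prim m" and "i \<le> k" "k \<le> l"
  shows "order z (phi (hlki l k i)) = mult_h l k m i"
proof -
  have "order z (phi (hlki l k i)) =
     (\<Sum>j<k-i. if m dvd (l - i - j) then 1 else 0) + (\<Sum>j<i. if m dvd (i - j) then 1 else 0)"
    unfolding order_hlki[OF assms(2,3)] by (simp add: prim_dvd_iff[OF z])
  also have "(\<Sum>j<k-i. if m dvd (l - i - j) then 1 else 0) = (l - i) div m - (l - i - (k - i)) div m"
    using assms by (intro count_multiples) simp
  also have "(\<Sum>j<i. if m dvd (i - j) then 1 else 0) = i div m - (i - i) div m"
    by (intro count_multiples) simp
  also have "l - i - (k - i) = l - k" using assms by simp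
  finally show ?thesis by (simp add: mult_h_def)
qed

lemma order_hlki_not_root_of_unity:
  assumes "\<And>t. 0 < t \<Longrightarrow> z ^ t \<noteq> 1" and "i \<le> k" "k \<le> l"
  shows "order z (phi (hlki l k i)) = 0"
  unfolding order_hlki[OF assms(2,3)] using assms by (auto intro!: sum.neutral)

section \<open>The exponents of the gcd\<close>

definition dgcd :: "nat \<Rightarrow> nat \<Rightarrow> nat \<Rightarrow> nat" where
  "dgcd l k m = (if m \<le> k then (l + 1) div m - 1 - (l - k) div m else 0)"

lemma div_add_le:
  fixes x y m :: nat
  assumes "0 < m"
  shows "(x + y + 1) div m \<le> x div m + y div m + 1"
proof -
  have bound: "n < m * (n div m + 1)" for n
    using mult_div_mod_eq[of m n] mod_less_divisor[OF assms, of n]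
    unfolding distrib_left mult_1_right by linarith
  have "x + y + 1 < m * (x div m + 1) + m * (y div m + 1)"
    using bound[of x] bound[of y] by linarith
  then have "x + y + 1 < m * (x div m + y div m + 2)" by (simp add: algebra_simps)
  then have "(x + y + 1) div m < x div m + y div m + 2"
    using assms by (simp add: div_less_iff_less_mult mult.commute)
  then show ?thesis by simp
qed

lemma dgcd_le_mult_h:
  assumes "0 < m" "i \<le> k" "k \<le> l"
  shows "dgcd l k m \<le> mult_h l k m i"
proof (cases "m \<le> k")
  case True
  have "(l - i + i + 1) div m \<le> (l - i) div m + i div m + 1" by (rule div_add_le[OF assms(1)])
  moreover have "(l - k) div m \<le> (l - i) div m" using assms by (simp add: div_le_mono)
  ultimately show ?thesis using True assms by (simp add: dgcd_def mult_h_def)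
qed (simp add: dgcd_def)

lemma dgcd_attained:
  assumes "0 < m" "k \<le> l"
  shows "\<exists>i\<le>k. mult_h l k m i = dgcd l k m"
proof (cases "m \<le> k")
  case True
  have "(l + 1 - m) div m = (l + 1) div m - 1" "l - (m - 1) = l + 1 - m"
    using True assms by (simp_all add: le_div_geq)
  then show ?thesis
    using True assms by (intro exI[of _ "m - 1"]) (simp add: dgcd_def mult_h_def)
next
  case False
  then show ?thesis using assms by (intro exI[of _ k]) (simp add: dgcd_def mult_h_def)
qed

lemma dgcd_floor:
  assumes "0 < m" "k \<le> l"
  shows "int (dgcd l k m) = (if m \<le> k
              then \<lfloor>real (l + 1) / real m\<rfloor> - 1 - \<lfloor>real (l - k) / real m\<rfloor>
              else 0)"
proof (cases "m \<le> k")
  case True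
  have "(l - k) div m + 1 = (l - k + m) div m" using assms by (subst div_add_self2) auto
  also have "\<dots> \<le> (l + 1) div m" using True assms by (intro div_le_mono) simp
  moreover have "\<lfloor>real (l + 1) / real m\<rfloor> = int ((l + 1) div m)"
    and "\<lfloor>real (l - k) / real m\<rfloor> = int ((l - k) div m)"
    by (rule floor_divide_of_nat_eq)+
  ultimately show ?thesis using True by (simp add: dgcd_def of_nat_diff)
qed (simp add: dgcd_def)

section \<open>The candidate gcd P = prod_m Phi_m^{e_m}\<close>

text \<open>P = prod of Phi_m^{e_m} over 1 <= m <= l; since e_m = 0 for m > k this covers every
  nonzero exponent.\<close>
definition gcd_prod :: "nat \<Rightarrow> nat \<Rightarrow> int poly" where
  "gcd_prod l k = (\<Prod>m\<in>{1..l}. cyclo m ^ dgcd l k m)"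

lemma lead_coeff_gcd_prod: "lead_coeff (gcd_prod l k) = 1"
  by (simp add: gcd_prod_def lead_coeff_prod lead_coeff_power lead_coeff_cyclo)

lemma gcd_prod_ne_0: "gcd_prod l k \<noteq> 0"
  using lead_coeff_gcd_prod[of l k] by auto

lemma gcd_prod_support:
  assumes "k \<le> l"
  shows "gcd_prod l k = (\<Prod>m\<in>{m. 1 \<le> m \<and> dgcd l k m \<noteq> 0}. cyclo m ^ dgcd l k m)"
  unfolding gcd_prod_def
  by (rule prod.mono_neutral_right) (use assms in \<open>auto simp: dgcd_def split: if_splits\<close>)

lemma order_gcd_prod:
  "order z (phi (gcd_prod l k)) = (\<Sum>m\<in>{1..l}. if z \<in> prim m then dgcd l k m else 0)"
proof -
  have ne: "\<And>m. m \<in> {1..l} \<Longrightarrow> phi (cyclo m) ^ dgcd l k m \<noteq> 0"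
    by (simp add: cyclo_ne_0)
  have "order z (phi (gcd_prod l k)) = (\<Sum>m\<in>{1..l}. order z (phi (cyclo m) ^ dgcd l k m))"
    unfolding gcd_prod_def phi_prod phi_power by (rule order_prod[OF finite_atLeastAtMost ne])
  also have "\<dots> = (\<Sum>m\<in>{1..l}. if z \<in> prim m then dgcd l k m else 0)"
    by (intro sum.cong refl) (simp add: order_power cyclo_ne_0 order_cyclo)
  finally show ?thesis .
qed

lemma order_gcd_prod_prim:
  assumes z: "z \<in> prim m" and "k \<le> l"
  shows "order z (phi (gcd_prod l k)) = dgcd l k m"
proof -
  have "\<And>n. z \<in> prim n \<longleftrightarrow> n = m" using prim_unique[OF z] z by blast
  then have "order z (phi (gcd_prod l k)) = (if m \<in> {1..l} then dgcd l k m else 0)"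
    by (simp add: order_gcd_prod)
  then show ?thesis using prim_pos[OF z] assms(2) by (auto simp: dgcd_def)
qed

lemma order_gcd_prod_not_root_of_unity:
  assumes "\<And>t. 0 < t \<Longrightarrow> z ^ t \<noteq> 1"
  shows "order z (phi (gcd_prod l k)) = 0"
  using assms prim_one prim_pos by (force simp: order_gcd_prod intro: sum.neutral)

text \<open>P divides every h_{l,k,i}: its root orders are the minima of theirs.\<close>
lemma gcd_prod_dvd_hlki:
  assumes "i \<le> k" "k \<le> l"
  shows "gcd_prod l k dvd hlki l k i"
proof (rule monic_dvd_over_int[OF lead_coeff_gcd_prod], rule order_le_imp_dvd)
  show "phi (gcd_prod l k) \<noteq> 0" "phi (hlki l k i) \<noteq> 0"
    using gcd_prod_ne_0 hlki_ne_0[OF assms] by simp_all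
  show "order z (phi (gcd_prod l k)) \<le> order z (phi (hlki l k i))" for z
    using prim_or_not_root_of_unity[of z]
  proof
    assume "\<exists>m. z \<in> prim m"
    then obtain m where z: "z \<in> prim m" by blast
    show ?thesis
      unfolding order_gcd_prod_prim[OF z assms(2)] order_hlki_prim[OF z assms]
      by (rule dgcd_le_mult_h[OF prim_pos[OF z] assms])
  qed (simp add: order_gcd_prod_not_root_of_unity)
qed

lemma gcd_prod_order_attained:
  assumes "k \<le> l"
  shows "\<exists>i\<le>k. order z (phi (hlki l k i)) \<le> order z (phi (gcd_prod l k))"
  using prim_or_not_root_of_unity[of z]
proof
  assume "\<exists>m. z \<in> prim m"
  then obtain m where z: "z \<in> prim m" by blast
  obtain i where "i \<le> k" "mult_h l k m i = dgcd l k m"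
    using dgcd_attained[OF prim_pos[OF z] assms] by blast
  then show ?thesis using order_hlki_prim[OF z _ assms] order_gcd_prod_prim[OF z assms] by auto
next
  assume "\<forall>t. 0 < t \<longrightarrow> z ^ t \<noteq> 1"
  then show ?thesis using order_hlki_not_root_of_unity[of z 0 k l] assms by auto
qed

section \<open>Gcds in Z[q,q^-1] via root orders\<close>

lemma order_monom_nonzero_point: "z \<noteq> 0 \<Longrightarrow> order z (monom (1::complex) b) = 0"
  by (intro order_0I) (simp add: poly_monom)

lemma order_phi_monom_mult:
  assumes "z \<noteq> 0" "a \<noteq> 0"
  shows "order z (phi (monom 1 j * a)) = order z (phi a)"
  using assms by (simp add: phi_mult phi_monom order_mult order_monom_nonzero_point)

lemma ldvd_order_le:
  assumes "ldvd a b" "b \<noteq> 0" "z \<noteq> 0"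
  shows "order z (phi a) \<le> order z (phi b)"
proof -
  obtain j where "a dvd monom 1 j * b" using assms(1) by (auto simp: ldvd_def)
  then have "phi a dvd phi (monom 1 j * b)" by (metis dvd_def phi_mult)
  then have "order z (phi a) \<le> order z (phi (monom 1 j * b))"
    using assms(2) by (intro dvd_imp_order_le) auto
  then show ?thesis using order_phi_monom_mult[OF assms(3,2)] by simp
qed

lemma eq_by_nonzero_orders:
  fixes g P :: "int poly"
  assumes g: "g \<noteq> 0" and P: "lead_coeff P = 1" "order 0 (phi P) = 0"
    and orders: "\<And>z. z \<noteq> 0 \<Longrightarrow> order z (phi g) = order z (phi P)"
  shows "g = smult (lead_coeff g) (monom 1 (order 0 (phi g)) * P)"
proof -
  define Q where "Q = monom (1::complex) (order 0 (phi g)) * phi P"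
  have P_ne: "phi P \<noteq> 0" using P(1) by (metis phi_eq_0_iff leading_coeff_0_iff zero_neq_one)
  then have Q_ne: "Q \<noteq> 0" by (simp add: Q_def)
  have same: "order z (phi g) = order z Q" for z
    using orders[of z] P(2) P_ne
    by (cases "z = 0") (simp_all add: Q_def order_mult order_monom_nonzero_point)
  have "lead_coeff Q = 1"
    using P(1) by (simp add: Q_def lead_coeff_mult degree_monom_eq lead_coeff_phi)
  then have "phi g = smult (lead_coeff (phi g)) Q"
    using same_orders_imp_proportional[OF _ Q_ne same] g by simp
  also have "\<dots> = phi (smult (lead_coeff g) (monom 1 (order 0 (phi g)) * P))"
    by (simp add: Q_def lead_coeff_phi map_poly_smult phi_mult phi_monom)
  finally show ?thesis by (rule phi_inj)
qed

lemma ldvd_unit_constant_term: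
  assumes "ldvd (smult c Q) h" "is_unit (poly h 0)"
  shows "is_unit c"
proof -
  obtain b w where eq: "monom 1 b * h = smult c Q * w" using assms(1) by (auto simp: ldvd_def)
  have "coeff h 0 = coeff (monom 1 b * h) b" by (simp add: coeff_monom_mult)
  also have "\<dots> = c * coeff (Q * w) b" unfolding eq by simp
  finally have "coeff h 0 = c * coeff (Q * w) b" .
  then have "c dvd poly h 0" by (simp add: poly_0_coeff_0)
  then show ?thesis using assms(2) by (rule dvd_unit_imp_unit)
qed

lemma lgcd_eq_unit_monom_mult:
  fixes H :: "int poly set" and g P :: "int poly"
  assumes g: "is_lgcd g H"
    and P: "lead_coeff P = 1" "order 0 (phi P) = 0"
    and P_dvd: "\<And>h. h \<in> H \<Longrightarrow> P dvd h"
    and P_attained: "\<And>z. z \<noteq> 0 \<Longrightarrow> \<exists>h\<in>H. h \<noteq> 0 \<and> order z (phi h) \<le> order z (phi P)"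
    and h0: "h0 \<in> H" "is_unit (poly h0 0)"
  shows "\<exists>u j. (u = 1 \<or> u = -1) \<and> g = smult u (monom 1 j * P)"
proof -
  have g_dvd: "\<And>h. h \<in> H \<Longrightarrow> ldvd g h" using g by (simp add: is_lgcd_def)
  have "ldvd P g" using g P_dvd by (simp add: is_lgcd_def ldvd_def)
  have g_ne: "g \<noteq> 0"
    using g_dvd[OF h0(1)] h0(2) by (auto simp: ldvd_def)
  have "order z (phi g) = order z (phi P)" if z: "z \<noteq> 0" for z
  proof (rule antisym)
    obtain h where "h \<in> H" "h \<noteq> 0" "order z (phi h) \<le> order z (phi P)"
      using P_attained[OF z] by blast
    then show "order z (phi g) \<le> order z (phi P)"
      using ldvd_order_le[OF g_dvd \<open>h \<noteq> 0\<close> z] by fastforce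
    show "order z (phi P) \<le> order z (phi g)" by (rule ldvd_order_le[OF \<open>ldvd P g\<close> g_ne z])
  qed
  then have g_eq: "g = smult (lead_coeff g) (monom 1 (order 0 (phi g)) * P)"
    using eq_by_nonzero_orders[OF g_ne P] by blast
  then have "is_unit (lead_coeff g)"
    using ldvd_unit_constant_term g_dvd[OF h0(1)] h0(2) by metis
  then have "lead_coeff g = 1 \<or> lead_coeff g = -1" by auto
  then show ?thesis using g_eq by blast
qed

lemma dm_eqI:
  assumes m: "0 < m" and g: "g \<noteq> 0" and "cyclo m ^ e dvd g"
    and order_le: "order (cis (2 * pi / real m)) (phi g) \<le> e"
  shows "dm m g = e"
  unfolding dm_def
proof (rule Greatest_equality)
  show "ldvd (cyclo m ^ e) g" using assms(3) by (auto simp: ldvd_def intro: exI[of _ 0])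
next
  fix y assume y: "ldvd (cyclo m ^ y) g"
  let ?z = "cis (2 * pi / real m)"
  have z: "?z \<in> prim m" by (rule omega_prim[OF m])
  have "y = order ?z (phi (cyclo m ^ y))"
    using z m by (simp add: phi_power order_power cyclo_ne_0 order_cyclo)
  also have "\<dots> \<le> order ?z (phi g)" by (rule ldvd_order_le[OF y g prim_ne0[OF z]])
  finally show "y \<le> e" using order_le by simp
qed

lemma dm_unit_monom_gcd_prod:
  assumes "k \<le> l" "0 < m" "u = 1 \<or> u = -1"
  shows "dm m (smult u (monom 1 j * gcd_prod l k)) = dgcd l k m"
proof (rule dm_eqI[OF assms(2)])
  let ?z = "cis (2 * pi / real m)"
  have z: "?z \<in> prim m" by (rule omega_prim[OF assms(2)])
  show "smult u (monom 1 j * gcd_prod l k) \<noteq> 0" using assms(3) gcd_prod_ne_0 by auto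
  have "cyclo m ^ dgcd l k m dvd gcd_prod l k"
  proof (cases "dgcd l k m = 0")
    case False
    then have "m \<in> {1..l}" using assms by (auto simp: dgcd_def split: if_splits)
    then show ?thesis unfolding gcd_prod_def by (intro dvd_prodI) simp_all
  qed simp
  then show "cyclo m ^ dgcd l k m dvd smult u (monom 1 j * gcd_prod l k)"
    using assms(3) by (auto intro: dvd_mult2)
  have "order ?z (phi (smult u (monom 1 j * gcd_prod l k))) = order ?z (phi (gcd_prod l k))"
    using assms(3) prim_ne0[OF z] gcd_prod_ne_0
    by (auto simp: map_poly_smult order_smult order_phi_monom_mult)
  then show "order ?z (phi (smult u (monom 1 j * gcd_prod l k))) \<le> dgcd l k m"
    using order_gcd_prod_prim[OF z assms(1)] by simp
qed

lemma lgcd_hlki: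
  assumes "k \<le> l" and "is_lgcd g (hlki l k ` {0..k})"
  shows "\<exists>u j. (u = 1 \<or> u = -1) \<and> g = smult u (monom 1 j * gcd_prod l k)"
proof -
  let ?H = "hlki l k ` {0..k}"
  have dvd: "\<And>h. h \<in> ?H \<Longrightarrow> gcd_prod l k dvd h"
    using gcd_prod_dvd_hlki[OF _ assms(1)] by auto
  have at_0: "order 0 (phi (gcd_prod l k)) = 0"
    by (rule order_gcd_prod_not_root_of_unity) (simp add: power_0_left)
  have attained: "\<exists>h\<in>?H. h \<noteq> 0 \<and> order z (phi h) \<le> order z (phi (gcd_prod l k))" for z
  proof -
    obtain i where "i \<le> k" "order z (phi (hlki l k i)) \<le> order z (phi (gcd_prod l k))"
      using gcd_prod_order_attained[OF assms(1)] by blast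
    then show ?thesis using hlki_ne_0[OF _ assms(1)] by (intro bexI[of _ "hlki l k i"]) auto
  qed
  have h0: "hlki l k 0 \<in> ?H" "is_unit (poly (hlki l k 0) 0)"
    by (simp_all add: poly_hlki_0_at_0[OF assms(1)])
  show ?thesis
    by (rule lgcd_eq_unit_monom_mult[OF assms(2) lead_coeff_gcd_prod at_0 dvd attained h0])
qed

theorem lemma4p1:
  fixes l k :: nat and g :: "int poly"
  assumes "k \<le> l"
    and "is_lgcd g (hlki l k ` {0..k})"
  shows "(\<forall>m::nat. 1 \<le> m \<longrightarrow>
           int (dm m g) = (if m \<le> k
              then \<lfloor>real (l + 1) / real m\<rfloor> - 1 - \<lfloor>real (l - k) / real m\<rfloor>
              else 0))
    \<and> (\<exists>(u::int) (j::nat). (u = 1 \<or> u = -1) \<and>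
           g = smult u (monom 1 j) * (\<Prod>m\<in>{m. 1 \<le> m \<and> dm m g \<noteq> 0}. cyclo m ^ dm m g))"
proof -
  note kl = assms(1)
  obtain u j where u: "u = 1 \<or> u = -1" and g: "g = smult u (monom 1 j * gcd_prod l k)"
    using lgcd_hlki[OF assms] by blast
  have dm: "dm m g = dgcd l k m" if "1 \<le> m" for m
    unfolding g by (rule dm_unit_monom_gcd_prod[OF kl _ u]) (use that in simp)
  then have exponents: "\<forall>m::nat. 1 \<le> m \<longrightarrow> int (dm m g) = (if m \<le> k
      then \<lfloor>real (l + 1) / real m\<rfloor> - 1 - \<lfloor>real (l - k) / real m\<rfloor> else 0)"
    using dgcd_floor[OF _ kl] by simp
  have "{m. 1 \<le> m \<and> dm m g \<noteq> 0} = {m. 1 \<le> m \<and> dgcd l k m \<noteq> 0}"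
    using dm by auto
  then have prod: "(\<Prod>m\<in>{m. 1 \<le> m \<and> dm m g \<noteq> 0}. cyclo m ^ dm m g) = gcd_prod l k"
    unfolding gcd_prod_support[OF kl] using dm by (intro prod.cong) simp_all
  have "g = smult u (monom 1 j) * (\<Prod>m\<in>{m. 1 \<le> m \<and> dm m g \<noteq> 0}. cyclo m ^ dm m g)"
    unfolding prod using g by simp
  with exponents u show ?thesis by blast
qed

end
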